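(* Let $f\in C(\mathbb{R};\mathbb{R})$ satisfy $f(0)=0$ and $xf(x)>0$ for all $x\neq 0$, and let $g\in C([0,\infty);\mathbb{R})$ with $g\in L^1(0,\infty)$. Then every continuous solution $x$ of \[ x'(t)=-f(x(t))+g(t),\quad t>0;\qquad x(0)=\xi\in\mathbb{R}, \] satisfies $\lim_{t\to\infty}x(t)=0$.
   Context: Solutions are understood to be global continuous solutions on $[0,\infty)$ (the sign condition on $f$ ensures no blow-up in finite time). *)

theory Defs
  imports "HOL-Analysis.Analysis"
begin

end

theory Submission
  imports Defs
begin

text \<open>
  Write \<open>M = \<integral>\<^sub>0\<^sup>\<infinity> \<bar>g\<bar>\<close>. Since \<open>f\<close> pushes \<open>x\<close> towards \<open>0\<close>, the quantity \<open>\<bar>x\<bar>\<close> can only grow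
  through the forcing: \<open>\<bar>x t\<bar> \<le> \<bar>x t\<^sub>0\<bar> + \<integral>\<^bsub>t\<^sub>0\<^esub>\<^sup>t \<bar>g\<bar>\<close> for \<open>t\<^sub>0 \<le> t\<close>. In particular \<open>x\<close> is
  bounded by \<open>\<bar>\<xi>\<bar> + M\<close>. If \<open>\<bar>x\<bar> \<ge> c > 0\<close> from some time on, then \<open>x\<close> keeps one sign and
  stays in a compact interval on which \<open>\<bar>f\<bar> \<ge> m > 0\<close>; hence \<open>\<bar>x\<bar>\<close> decreases at least
  like \<open>-m t\<close> up to an error \<open>2 M\<close>, which is absurd. So \<open>\<bar>x\<bar>\<close> is small at arbitrarily
  late times, and the first estimate together with the smallness of the tails of
  \<open>\<integral> \<bar>g\<bar>\<close> keeps it small afterwards.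
\<close>

lemma DERIV_nonpos_where_pos_imp_nonpos:
  fixes \<phi> \<phi>' :: "real \<Rightarrow> real"
  assumes "a \<le> b" and cont: "continuous_on {a..b} \<phi>"
    and deriv: "\<And>t. a < t \<Longrightarrow> t < b \<Longrightarrow> (\<phi> has_real_derivative \<phi>' t) (at t)"
    and deriv_nonpos: "\<And>t. a < t \<Longrightarrow> t < b \<Longrightarrow> \<phi> t > 0 \<Longrightarrow> \<phi>' t \<le> 0"
    and "\<phi> a \<le> 0"
  shows "\<phi> b \<le> 0"
proof -
  define Z where "Z = {a..b} \<inter> \<phi> -` {..0}"
  have "closed Z"
    unfolding Z_def by (rule continuous_closed_preimage[OF cont]) auto
  moreover have "bounded Z"
    unfolding Z_def by (rule bounded_subset[of "{a..b}"]) auto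
  moreover have "a \<in> Z"
    using assms unfolding Z_def by auto
  ultimately obtain s where "s \<in> Z" and s_max: "\<And>t. t \<in> Z \<Longrightarrow> t \<le> s"
    using compact_attains_sup[of Z] compact_eq_bounded_closed by blast
  then have s: "a \<le> s" "s \<le> b" "\<phi> s \<le> 0"
    unfolding Z_def by auto
  have pos_after_s: "\<phi> t > 0" if "s < t" "t \<le> b" for t
    using s_max[of t] that s unfolding Z_def by (cases "\<phi> t > 0") auto
  have "\<phi> b \<le> \<phi> s"
  proof (rule DERIV_nonpos_imp_decreasing_open[OF s(2)])
    fix t assume "s < t" "t < b"
    then show "\<exists>y. (\<phi> has_real_derivative y) (at t) \<and> y \<le> 0"
      using deriv deriv_nonpos pos_after_s s by (intro exI[of _ "\<phi>' t"]) auto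
  next
    show "continuous_on {s..b} \<phi>"
      by (rule continuous_on_subset[OF cont]) (use s in auto)
  qed
  with s show ?thesis by linarith
qed

lemma continuous_on_Icc_nonzero_pos:
  fixes y :: "real \<Rightarrow> real"
  assumes "a \<le> b" "continuous_on {a..b} y" "\<And>t. t \<in> {a..b} \<Longrightarrow> y t \<noteq> 0" "0 < y a"
  shows "0 < y b"
proof (rule ccontr)
  assume "\<not> 0 < y b"
  then obtain z where "z \<in> {a..b}" "y z = 0"
    using IVT2'[of y b 0 a] assms by auto
  with assms show False by blast
qed

lemma continuous_on_Icc_pos_lower_bound:
  fixes h :: "real \<Rightarrow> real"
  assumes "continuous_on {a..b} h" "\<And>y. y \<in> {a..b} \<Longrightarrow> h y > 0"
  obtains m where "m > 0" "\<And>y. y \<in> {a..b} \<Longrightarrow> m \<le> h y"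
proof (cases "a \<le> b")
  case True
  then obtain y0 where "y0 \<in> {a..b}" "\<And>y. y \<in> {a..b} \<Longrightarrow> h y0 \<le> h y"
    using continuous_attains_inf[of "{a..b}" h] assms by auto
  with assms that show ?thesis by blast
next
  case False
  with that show ?thesis by (intro that[of 1]) auto
qed

lemma has_real_derivative_integral_upper:
  assumes "continuous_on {a..} h" "a < t"
  shows "((\<lambda>u. integral {a..u} h) has_real_derivative h t) (at t)"
proof -
  have "continuous_on {a..t+1} h"
    by (rule continuous_on_subset[OF assms(1)]) auto
  from integral_has_real_derivative[OF this, of t] assms(2)
  show ?thesis by (simp add: at_within_Icc_at)
qed

locale dissipative_ode =
  fixes f g x :: "real \<Rightarrow> real"
  assumes f_cont: "continuous_on UNIV f"
    and f_sign: "\<And>y. y \<noteq> 0 \<Longrightarrow> y * f y > 0"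
    and g_cont: "continuous_on {0..} g"
    and g_L1: "g absolutely_integrable_on {0..}"
    and x_cont: "continuous_on {0..} x"
    and x_ode: "\<And>t. t > 0 \<Longrightarrow> (x has_real_derivative (- f (x t) + g t)) (at t)"
begin

lemma reflection: "dissipative_ode (\<lambda>y. - f (- y)) (\<lambda>t. - g t) (\<lambda>t. - x t)"
proof
  show "continuous_on UNIV (\<lambda>y. - f (- y))"
    by (intro continuous_intros continuous_on_compose2[OF f_cont]) auto
  show "y * - f (- y) > 0" if "y \<noteq> 0" for y
    using f_sign[of "- y"] that by simp
  show "continuous_on {0..} (\<lambda>t. - g t)"
    using g_cont by (intro continuous_intros)
  show "(\<lambda>t. - g t) absolutely_integrable_on {0..}"
    using g_L1 by (auto simp: absolutely_integrable_on_def intro: integrable_neg)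
  show "continuous_on {0..} (\<lambda>t. - x t)"
    using x_cont by (intro continuous_intros)
  show "((\<lambda>t. - x t) has_real_derivative - (- f (- (- x t))) + - g t) (at t)" if "t > 0" for t
    using DERIV_minus[OF x_ode[OF that]] by simp
qed

lemma f_pos: "y > 0 \<Longrightarrow> f y > 0"
  using f_sign[of y] by (simp add: zero_less_mult_iff)

lemma abs_g_integrable_on: "0 \<le> a \<Longrightarrow> (\<lambda>s. \<bar>g s\<bar>) integrable_on {a..b}"
  using g_L1 by (auto simp: absolutely_integrable_on_def intro: integrable_on_subinterval)

lemma g_integrable_on: "0 \<le> a \<Longrightarrow> g integrable_on {a..b}"
  using set_lebesgue_integral_eq_integral(1)[OF g_L1] by (auto intro: integrable_on_subinterval)

lemma integral_abs_g_le: "0 \<le> a \<Longrightarrow> integral {a..b} (\<lambda>s. \<bar>g s\<bar>) \<le> integral {0..} (\<lambda>s. \<bar>g s\<bar>)"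
  using g_L1 abs_g_integrable_on
  by (intro integral_subset_le) (auto simp: absolutely_integrable_on_def)

lemma abs_integral_g_le: "0 \<le> a \<Longrightarrow> \<bar>integral {a..b} g\<bar> \<le> integral {0..} (\<lambda>s. \<bar>g s\<bar>)"
  using integral_norm_bound_integral[of g "{a..b}" "\<lambda>s. \<bar>g s\<bar>"] integral_abs_g_le[of a b]
    g_integrable_on abs_g_integrable_on by simp

lemma integral_abs_g_tail:
  assumes "e > 0"
  obtains T where "T \<ge> 0" "\<And>t0 t. T \<le> t0 \<Longrightarrow> integral {t0..t} (\<lambda>s. \<bar>g s\<bar>) < e"
proof -
  define A where "A u = integral {0..u} (\<lambda>s. \<bar>g s\<bar>)" for u
  have bdd: "bdd_above (A ` {0..})"
    unfolding A_def using integral_abs_g_le by (intro bdd_aboveI) auto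
  obtain T where T: "T \<ge> 0" "(SUP u\<in>{0..}. A u) - e < A T"
    using less_cSUP_iff[OF _ bdd, of "(SUP u\<in>{0..}. A u) - e"] \<open>e > 0\<close> by auto
  have "integral {t0..t} (\<lambda>s. \<bar>g s\<bar>) < e" if "T \<le> t0" for t0 t
  proof (cases "t0 \<le> t")
    case True
    have "A t = A t0 + integral {t0..t} (\<lambda>s. \<bar>g s\<bar>)"
      unfolding A_def using True that T abs_g_integrable_on[of 0 t]
      by (intro Henstock_Kurzweil_Integration.integral_combine[symmetric]) auto
    moreover have "A t \<le> (SUP u\<in>{0..}. A u)"
      using that True T by (intro cSUP_upper[OF _ bdd]) auto
    moreover have "A T \<le> A t0"
      unfolding A_def using that T abs_g_integrable_on
      by (intro integral_subset_le) auto
    ultimately show ?thesis using T by linarith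
  qed (use \<open>e > 0\<close> in simp)
  with T that show ?thesis by blast
qed

lemma upper_bound:
  assumes "0 \<le> t0" "t0 \<le> t" "0 \<le> c" "x t0 \<le> c"
  shows "x t \<le> c + integral {t0..t} (\<lambda>s. \<bar>g s\<bar>)"
proof -
  define \<phi> where "\<phi> u = x u - c - integral {t0..u} (\<lambda>s. \<bar>g s\<bar>)" for u
  have abs_g_cont: "continuous_on {t0..} (\<lambda>s. \<bar>g s\<bar>)"
    using g_cont assms(1) by (intro continuous_intros) (auto elim: continuous_on_subset)
  have "\<phi> t \<le> 0"
  proof (rule DERIV_nonpos_where_pos_imp_nonpos[OF assms(2),
        where \<phi>' = "\<lambda>u. - f (x u) + g u - \<bar>g u\<bar>"])
    show "continuous_on {t0..t} \<phi>"
      unfolding \<phi>_def using assms(1) abs_g_integrable_on[of t0 t]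
      by (intro continuous_intros indefinite_integral_continuous_1 continuous_on_subset[OF x_cont])
        auto
  next
    fix u assume "t0 < u" "u < t"
    then show "(\<phi> has_real_derivative - f (x u) + g u - \<bar>g u\<bar>) (at u)"
      unfolding \<phi>_def using x_ode has_real_derivative_integral_upper[OF abs_g_cont] assms(1)
      by (auto intro!: derivative_eq_intros)
  next
    fix u assume "t0 < u" "u < t" "0 < \<phi> u"
    moreover have "integral {t0..u} (\<lambda>s. \<bar>g s\<bar>) \<ge> 0"
      by (rule integral_nonneg) (use abs_g_integrable_on assms(1) in auto)
    ultimately have "f (x u) > 0"
      using assms(3) f_pos unfolding \<phi>_def by simp
    then show "- f (x u) + g u - \<bar>g u\<bar> \<le> 0" by linarith
  qed (use assms(4) \<phi>_def in simp)
  then show ?thesis unfolding \<phi>_def by simp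
qed

lemma abs_bound:
  assumes "0 \<le> t0" "t0 \<le> t" "\<bar>x t0\<bar> \<le> c"
  shows "\<bar>x t\<bar> \<le> c + integral {t0..t} (\<lambda>s. \<bar>g s\<bar>)"
proof -
  interpret reflected: dissipative_ode "\<lambda>y. - f (- y)" "\<lambda>t. - g t" "\<lambda>t. - x t"
    by (rule reflection)
  have "0 \<le> c"
    using assms(3) by linarith
  then show ?thesis
    using upper_bound[of t0 t c] reflected.upper_bound[of t0 t c] assms by (auto simp: abs_le_iff)
qed

lemma bounded: "0 \<le> t \<Longrightarrow> \<bar>x t\<bar> \<le> \<bar>x 0\<bar> + integral {0..} (\<lambda>s. \<bar>g s\<bar>)"
  using abs_bound[of 0 t "\<bar>x 0\<bar>"] integral_abs_g_le[of 0 t] by simp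

lemma not_eventually_ge:
  assumes "c > 0"
  shows "\<not> (\<forall>\<^sub>F t in at_top. c \<le> x t)"
proof
  assume "\<forall>\<^sub>F t in at_top. c \<le> x t"
  then obtain T0 where "\<And>t. T0 \<le> t \<Longrightarrow> c \<le> x t"
    unfolding eventually_at_top_linorder by blast
  then obtain T where "T > 0" and x_ge: "\<And>t. T \<le> t \<Longrightarrow> c \<le> x t"
    by (metis max.boundedE max.cobounded2 zero_less_one less_le_trans)
  define M where "M = integral {0..} (\<lambda>s. \<bar>g s\<bar>)"
  define B where "B = \<bar>x 0\<bar> + M"
  have x_le: "x t \<le> B" if "t \<ge> 0" for t
    using bounded[OF that] unfolding B_def M_def by simp
  obtain m where "m > 0" and f_ge: "\<And>y. y \<in> {c..B} \<Longrightarrow> m \<le> f y"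
    using continuous_on_Icc_pos_lower_bound[of c B f] continuous_on_subset[OF f_cont]
      f_pos \<open>c > 0\<close> by (metis atLeastAtMost_iff less_le_trans subset_UNIV)
  have "M \<ge> 0" "B \<ge> 0"
    using abs_integral_g_le[of 0 0] x_le[of 0] unfolding M_def B_def by auto
  define t where "t = T + (B + 2 * M) / m + 1"
  define G where "G u = integral {0..u} g" for u
  have "T \<le> t"
    unfolding t_def using \<open>m > 0\<close> \<open>M \<ge> 0\<close> \<open>B \<ge> 0\<close> by simp
  have "x t + m * t - G t \<le> x T + m * T - G T"
  proof (rule DERIV_nonpos_imp_nonincreasing[OF \<open>T \<le> t\<close>])
    fix u assume "T \<le> u" "u \<le> t"
    with \<open>T > 0\<close> have "u > 0" by linarith
    have "m \<le> f (x u)"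
      using f_ge x_ge[of u] x_le[of u] \<open>T \<le> u\<close> \<open>u > 0\<close> by simp
    moreover have "((\<lambda>u. x u + m * u - G u) has_real_derivative - f (x u) + g u + m - g u) (at u)"
      unfolding G_def using x_ode[OF \<open>u > 0\<close>] has_real_derivative_integral_upper[OF g_cont \<open>u > 0\<close>]
      by (auto intro!: derivative_eq_intros)
    ultimately show "\<exists>y. ((\<lambda>u. x u + m * u - G u) has_real_derivative y) (at u) \<and> y \<le> 0"
      by (intro exI[of _ "- f (x u) + g u + m - g u"]) auto
  qed
  then have "x t \<le> B - m * (t - T) + 2 * M"
    using x_le[of T] abs_integral_g_le[of 0 t] abs_integral_g_le[of 0 T] \<open>T > 0\<close>
    unfolding G_def M_def by (simp add: algebra_simps)
  also have "m * (t - T) = B + 2 * M + m"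
    unfolding t_def using \<open>m > 0\<close> by (simp add: field_simps)
  finally have "x t \<le> - m" by simp
  with x_ge[OF \<open>T \<le> t\<close>] \<open>c > 0\<close> \<open>m > 0\<close> show False by linarith
qed

lemma not_eventually_abs_ge:
  assumes "c > 0"
  shows "\<not> (\<forall>\<^sub>F t in at_top. c \<le> \<bar>x t\<bar>)"
proof
  interpret reflected: dissipative_ode "\<lambda>y. - f (- y)" "\<lambda>t. - g t" "\<lambda>t. - x t"
    by (rule reflection)
  assume "\<forall>\<^sub>F t in at_top. c \<le> \<bar>x t\<bar>"
  then obtain T0 where "\<And>t. T0 \<le> t \<Longrightarrow> c \<le> \<bar>x t\<bar>"
    unfolding eventually_at_top_linorder by blast
  then obtain T where "T \<ge> 0" and abs_ge: "\<And>t. T \<le> t \<Longrightarrow> c \<le> \<bar>x t\<bar>"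
    by (metis max.cobounded2 max.boundedE)
  have nonzero: "x t \<noteq> 0" if "T \<le> t" for t
    using abs_ge[OF that] \<open>c > 0\<close> by auto
  have sign_persists: "0 < y T \<Longrightarrow> 0 < y t"
    if "T \<le> t" "continuous_on {0..} y" "\<And>t. T \<le> t \<Longrightarrow> y t \<noteq> 0" for y :: "real \<Rightarrow> real" and t
    using that \<open>T \<ge> 0\<close>
    by (intro continuous_on_Icc_nonzero_pos[of T t y]) (auto elim: continuous_on_subset)
  consider "0 < x T" | "0 < - x T"
    using nonzero[of T] by linarith
  then show False
  proof cases
    case 1
    have "c \<le> x t" if "T \<le> t" for t
      using sign_persists[OF that x_cont nonzero 1] abs_ge[OF that] by simp
    then have "\<forall>\<^sub>F t in at_top. c \<le> x t"
      unfolding eventually_at_top_linorder by blast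
    with not_eventually_ge[OF \<open>c > 0\<close>] show False by blast
  next
    case 2
    have "c \<le> - x t" if "T \<le> t" for t
      using sign_persists[OF that reflected.x_cont _ 2] nonzero abs_ge[OF that] by simp
    then have "\<forall>\<^sub>F t in at_top. c \<le> - x t"
      unfolding eventually_at_top_linorder by blast
    with reflected.not_eventually_ge[OF \<open>c > 0\<close>] show False by blast
  qed
qed

lemma tendsto_zero: "(x \<longlongrightarrow> 0) at_top"
proof (rule tendstoI)
  fix e :: real assume "e > 0"
  define c where "c = e / 2"
  have "c > 0" unfolding c_def using \<open>e > 0\<close> by simp
  obtain T where "T \<ge> 0" and tail: "\<And>t0 t. T \<le> t0 \<Longrightarrow> integral {t0..t} (\<lambda>s. \<bar>g s\<bar>) < c"
    using integral_abs_g_tail[OF \<open>c > 0\<close>] by blast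
  have "\<exists>\<^sub>F t in at_top. \<bar>x t\<bar> < c"
    using not_eventually_abs_ge[OF \<open>c > 0\<close>] by (simp add: frequently_def not_less)
  then obtain t0 where "T \<le> t0" "\<bar>x t0\<bar> < c"
    unfolding frequently_def eventually_at_top_linorder by (metis not_le)
  have "\<bar>x t\<bar> < e" if "t0 \<le> t" for t
    using abs_bound[of t0 t c] tail[of t0 t] \<open>T \<le> t0\<close> \<open>T \<ge> 0\<close> \<open>\<bar>x t0\<bar> < c\<close> that
    unfolding c_def by simp
  then show "\<forall>\<^sub>F t in at_top. dist (x t) 0 < e"
    unfolding eventually_at_top_linorder by auto
qed

end

theorem proposition1:
  fixes f g x :: "real \<Rightarrow> real" and \<xi> :: real
  assumes f_cont: "continuous_on UNIV f"
    and f_zero: "f 0 = 0"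
    and f_sign: "\<And>y. y \<noteq> 0 \<Longrightarrow> y * f y > 0"
    and g_cont: "continuous_on {0..} g"
    and g_L1: "g absolutely_integrable_on {0..}"
    and x_cont: "continuous_on {0..} x"
    and x_init: "x 0 = \<xi>"
    and x_ode: "\<And>t. t > 0 \<Longrightarrow> (x has_real_derivative (- f (x t) + g t)) (at t)"
  shows "(x \<longlongrightarrow> 0) at_top"
proof -
  interpret dissipative_ode f g x
    using f_cont f_sign g_cont g_L1 x_cont x_ode by unfold_locales
  show ?thesis by (rule tendsto_zero)
qed

end
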